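(* Let $\mathbf{A},\mathbf{B}$ be adjacency matrices of two undirected connected graphs on $\mathcal{N}=\{1,\dots,N\}$, let $\beta_1,\delta_1,\beta_2,\delta_2>0$, $\tau_1=\beta_1/\delta_1$, $\tau_2=\beta_2/\delta_2$, and consider the linear bi-virus system $$\frac{d\mathbf{x}}{dt}=\beta_1\mathrm{diag}(\mathbf{1}-\mathbf{x}-\mathbf{y})\mathbf{A}\mathbf{x}-\delta_1\mathbf{x},\qquad \frac{d\mathbf{y}}{dt}=\beta_2\mathrm{diag}(\mathbf{1}-\mathbf{x}-\mathbf{y})\mathbf{B}\mathbf{y}-\delta_2\mathbf{y}$$ on $D=\{(\mathbf{x},\mathbf{y})\in[0,1]^{2N}:\mathbf{x}+\mathbf{y}\le\mathbf{1}\}$. If $\tau_1\lambda(\mathbf{A})\le 1$ and $\tau_2\lambda(\mathbf{B})\le1$, then trajectories starting from any point in $D$ converge to $(\mathbf{0},\mathbf{0})$.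
   Context: $\lambda(\mathbf{M})$ denotes the largest real part of the eigenvalues of $\mathbf{M}$ (the spectral radius for non-negative matrices). *)

theory Defs
  imports "HOL-Analysis.Analysis"
begin

definition adjacency_matrix :: "real^'n^'n \<Rightarrow> bool" where
  "adjacency_matrix A \<longleftrightarrow>
     (\<forall>i j. A $ i $ j = 0 \<or> A $ i $ j = 1) \<and>
     (\<forall>i j. A $ i $ j = A $ j $ i) \<and>
     (\<forall>i. A $ i $ i = 0)"

definition graph_connected :: "real^'n^'n \<Rightarrow> bool" where
  "graph_connected A \<longleftrightarrow> (\<forall>i j. (i, j) \<in> {(u, v). A $ u $ v \<noteq> 0}\<^sup>*)"

definition cmat :: "real^'n^'n \<Rightarrow> complex^'n^'n" where
  "cmat A = (\<chi> i j. complex_of_real (A $ i $ j))"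

definition eigenvalues :: "real^'n^'n \<Rightarrow> complex set" where
  "eigenvalues A = {\<mu>. \<exists>v::complex^'n. v \<noteq> 0 \<and> cmat A *v v = \<mu> *s v}"

definition lambda_max :: "real^'n^'n \<Rightarrow> real" where
  "lambda_max A = Max (Re ` eigenvalues A)"

definition bivirus_domain :: "((real^'n) \<times> (real^'n)) set" where
  "bivirus_domain = {(x, y). (\<forall>i. 0 \<le> x $ i \<and> x $ i \<le> 1 \<and> 0 \<le> y $ i \<and> y $ i \<le> 1
                                      \<and> x $ i + y $ i \<le> 1)}"

definition bivirus_x :: "real^'n^'n \<Rightarrow> real \<Rightarrow> real \<Rightarrow> real^'n \<Rightarrow> real^'n \<Rightarrow> real^'n" where
  "bivirus_x A \<beta> \<delta> x y = (\<chi> i. \<beta> * (1 - x $ i - y $ i) * (A *v x) $ i - \<delta> * x $ i)"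

end

theory Submission
  imports Defs
begin

text \<open>For a symmetric matrix A, v \<bullet> A v \<le> \<lambda>(A) (v \<bullet> v), so the threshold condition
  \<tau> \<lambda>(A) \<le> 1 yields \<beta> (v \<bullet> A v) \<le> \<delta> (v \<bullet> v).

  The domain D is forward invariant: the sum P of the squared violations of the constraints
  x \<ge> 0, y \<ge> 0, x + y \<le> 1 satisfies P' \<le> K P on every bounded time interval and P(0) = 0,
  so P vanishes by Gronwall's inequality.

  On D, x \<bullet> x is a Lyapunov function: its derivative is at most -2 F(x), where
  F(w) = \<delta> (w \<bullet> w) - \<beta> (w \<bullet> A w) + \<beta> sum_i w_i^2 (A w)_i is positive on the nonnegative
  orthant away from 0. Hence x \<rightarrow> 0, and likewise y \<rightarrow> 0.\<close>

section \<open>The quadratic form of a symmetric matrix\<close>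

lemma symmetric_matrix_inner_commute:
  fixes A :: "real^'n^'n"
  assumes "transpose A = A"
  shows "u \<bullet> (A *v v) = v \<bullet> (A *v u)"
  by (metis assms dot_lmul_matrix inner_commute vector_transpose_matrix)

lemma linear_coeff_eq_0_if_quadratic_nonpos:
  fixes a b :: real
  assumes "\<And>r. 2 * r * a + r\<^sup>2 * b \<le> 0"
  shows "a = 0"
proof (rule ccontr)
  assume "a \<noteq> 0"
  define t where "t = 1 / (\<bar>b\<bar> + 1)"
  have "t > 0" "t * \<bar>b\<bar> < 1"
    by (auto simp: t_def field_simps)
  then have "2 + t * b > 0"
    by (smt (verit) abs_ge_self abs_minus_cancel mult_minus_right mult_left_mono)
  moreover have "t * a\<^sup>2 > 0"
    using \<open>t > 0\<close> \<open>a \<noteq> 0\<close> by simp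
  ultimately have "t * a\<^sup>2 * (2 + t * b) > 0"
    by (simp only: mult_pos_pos)
  moreover have "t * a\<^sup>2 * (2 + t * b) \<le> 0"
    using assms[of "t * a"] by (simp add: power2_eq_square algebra_simps)
  ultimately show False
    by linarith
qed

text \<open>The maximum of the quadratic form on the unit sphere is an eigenvalue: at a maximiser
  the first variation in every direction vanishes.\<close>

lemma symmetric_matrix_quadratic_form_le_eigenvalue:
  fixes A :: "real^'n^'n"
  assumes sym: "transpose A = A"
  obtains \<mu> u where "u \<noteq> 0" "A *v u = \<mu> *\<^sub>R u" "\<And>v. v \<bullet> (A *v v) \<le> \<mu> * (v \<bullet> v)"
proof -
  define q where "q v = v \<bullet> (A *v v)" for v :: "real^'n"
  have "sphere (0::real^'n) 1 \<noteq> {}"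
    by (simp add: sphere_def) (metis norm_axis_1)
  moreover have "continuous_on (sphere 0 1) q"
    unfolding q_def by (intro continuous_intros)
  ultimately obtain u where "u \<in> sphere 0 1" "\<forall>v \<in> sphere 0 1. q v \<le> q u"
    using continuous_attains_sup[OF compact_sphere] by blast
  then have u: "norm u = 1" and u_max: "\<And>v. norm v = 1 \<Longrightarrow> q v \<le> q u"
    by auto
  define \<mu> where "\<mu> = q u"
  have uu: "u \<bullet> u = 1"
    using u by (simp add: norm_eq_sqrt_inner)
  have le: "q v \<le> \<mu> * (v \<bullet> v)" for v
  proof (cases "v = 0")
    case False
    have "q v = (norm v)\<^sup>2 * q (v /\<^sub>R norm v)"
      using False by (simp add: q_def matrix_vector_mult_scaleR power2_eq_square field_simps)
    also have "\<dots> \<le> (norm v)\<^sup>2 * \<mu>"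
      using False u_max[of "v /\<^sub>R norm v"] by (simp add: \<mu>_def)
    finally show ?thesis
      by (simp add: power2_norm_eq_inner mult.commute)
  qed (simp add: q_def)
  have "z \<bullet> (A *v u - \<mu> *\<^sub>R u) = 0" for z
  proof (rule linear_coeff_eq_0_if_quadratic_nonpos)
    fix r :: real
    have "q (u + r *\<^sub>R z) = \<mu> + 2 * r * (z \<bullet> (A *v u)) + r\<^sup>2 * q z"
      using symmetric_matrix_inner_commute[OF sym, of u z]
      by (simp add: q_def \<mu>_def matrix_vector_right_distrib matrix_vector_mult_scaleR
          inner_add_left inner_add_right power2_eq_square algebra_simps)
    moreover have "(u + r *\<^sub>R z) \<bullet> (u + r *\<^sub>R z) = 1 + 2 * r * (z \<bullet> u) + r\<^sup>2 * (z \<bullet> z)"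
      using uu by (simp add: inner_add_left inner_add_right power2_eq_square algebra_simps inner_commute)
    ultimately show "2 * r * (z \<bullet> (A *v u - \<mu> *\<^sub>R u)) + r\<^sup>2 * (q z - \<mu> * (z \<bullet> z)) \<le> 0"
      using le[of "u + r *\<^sub>R z"] uu inner_commute[of u z]
      by (simp add: inner_diff_right algebra_simps power2_eq_square)
  qed
  from this[of "A *v u - \<mu> *\<^sub>R u"] have "A *v u = \<mu> *\<^sub>R u"
    by simp
  moreover have "u \<noteq> 0"
    using u by auto
  ultimately show thesis
    using le that unfolding q_def by blast
qed

lemma real_eigenvector_imp_eigenvalue:
  fixes A :: "real^'n^'n"
  assumes "u \<noteq> 0" "A *v u = \<mu> *\<^sub>R u"
  shows "complex_of_real \<mu> \<in> eigenvalues A"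
proof -
  define v where "v = (\<chi> i. complex_of_real (u $ i))"
  have "(cmat A *v v) $ i = complex_of_real ((A *v u) $ i)" for i
    by (simp add: cmat_def v_def matrix_vector_mult_def)
  then have "cmat A *v v = complex_of_real \<mu> *s v"
    using assms(2) by (simp add: vec_eq_iff v_def)
  moreover have "v \<noteq> 0"
    using assms(1) by (auto simp: v_def vec_eq_iff)
  ultimately show ?thesis
    unfolding eigenvalues_def by blast
qed

text \<open>If a + ib is a complex eigenvector for p + iq, symmetry gives q (a\<bullet>a + b\<bullet>b) = 0.\<close>

lemma symmetric_matrix_eigenvalue_real:
  fixes A :: "real^'n^'n"
  assumes sym: "transpose A = A" and "l \<in> eigenvalues A"
  obtains u where "u \<noteq> 0" "A *v u = Re l *\<^sub>R u"
proof -
  obtain v :: "complex^'n" where v: "v \<noteq> 0" "cmat A *v v = l *s v"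
    using assms(2) unfolding eigenvalues_def by blast
  define a where "a = (\<chi> i. Re (v $ i))"
  define b where "b = (\<chi> i. Im (v $ i))"
  have row: "(\<Sum>j\<in>UNIV. complex_of_real (A $ i $ j) * v $ j) = l * v $ i" for i
    using v(2) unfolding vec_eq_iff by (simp add: cmat_def matrix_vector_mult_def)
  have Aa: "A *v a = Re l *\<^sub>R a - Im l *\<^sub>R b"
    using arg_cong[OF row, of Re]
    by (simp add: vec_eq_iff matrix_vector_mult_def a_def b_def Re_sum)
  have Ab: "A *v b = Re l *\<^sub>R b + Im l *\<^sub>R a"
    using arg_cong[OF row, of Im]
    by (simp add: vec_eq_iff matrix_vector_mult_def a_def b_def Im_sum algebra_simps)
  have "a \<noteq> 0 \<or> b \<noteq> 0"
    using v(1) by (auto simp: a_def b_def vec_eq_iff complex_eq_iff)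
  then have "a \<bullet> a + b \<bullet> b > 0"
    by (metis add_nonneg_pos add_pos_nonneg inner_gt_zero_iff inner_ge_zero)
  moreover have "Im l * (a \<bullet> a + b \<bullet> b) = 0"
    using symmetric_matrix_inner_commute[OF sym, of a b] unfolding Aa Ab
    by (simp add: inner_add_right inner_diff_right inner_commute algebra_simps)
  ultimately have "Im l = 0"
    by simp
  then show thesis
    using that \<open>a \<noteq> 0 \<or> b \<noteq> 0\<close> Aa Ab by auto
qed

text \<open>Eigenvectors for distinct eigenvalues are orthogonal, hence independent.\<close>

lemma symmetric_matrix_finite_eigenvalues:
  fixes A :: "real^'n^'n"
  assumes sym: "transpose A = A"
  shows "finite {\<mu>. \<exists>u. u \<noteq> 0 \<and> A *v u = \<mu> *\<^sub>R u}" (is "finite ?E")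
proof -
  define e where "e \<mu> = (SOME u. u \<noteq> 0 \<and> A *v u = \<mu> *\<^sub>R u)" for \<mu>
  have e: "e \<mu> \<noteq> 0" "A *v e \<mu> = \<mu> *\<^sub>R e \<mu>" if "\<mu> \<in> ?E" for \<mu>
    using someI_ex[OF that[unfolded mem_Collect_eq]] unfolding e_def by blast+
  have orth: "e \<mu> \<bullet> e \<nu> = 0" if "\<mu> \<in> ?E" "\<nu> \<in> ?E" "\<mu> \<noteq> \<nu>" for \<mu> \<nu>
  proof -
    have "\<nu> * (e \<mu> \<bullet> e \<nu>) = \<mu> * (e \<nu> \<bullet> e \<mu>)"
      using symmetric_matrix_inner_commute[OF sym, of "e \<mu>" "e \<nu>"] that by (simp add: e)
    then show ?thesis
      using that(3) by (simp add: inner_commute)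
  qed
  have "inj_on e ?E"
  proof (rule inj_onI)
    fix \<mu> \<nu> assume "\<mu> \<in> ?E" "\<nu> \<in> ?E" "e \<mu> = e \<nu>"
    then show "\<mu> = \<nu>"
      using orth[of \<mu> \<nu>] e(1)[of \<mu>] by auto
  qed
  moreover have "independent (e ` ?E)"
  proof (rule pairwise_orthogonal_independent)
    show "pairwise orthogonal (e ` ?E)"
      unfolding pairwise_def orthogonal_def using orth by blast
    show "0 \<notin> e ` ?E"
      using e(1) by force
  qed
  ultimately show ?thesis
    using finite_imageD independent_bound_general by blast
qed

lemma quadratic_form_le_lambda_max:
  fixes A :: "real^'n^'n"
  assumes sym: "transpose A = A"
  shows "v \<bullet> (A *v v) \<le> lambda_max A * (v \<bullet> v)"
proof -
  obtain \<mu> u where "u \<noteq> 0" "A *v u = \<mu> *\<^sub>R u" and \<mu>: "\<And>v. v \<bullet> (A *v v) \<le> \<mu> * (v \<bullet> v)"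
    using symmetric_matrix_quadratic_form_le_eigenvalue[OF sym] by blast
  then have "\<mu> \<in> Re ` eigenvalues A"
    by (metis Re_complex_of_real image_eqI real_eigenvector_imp_eigenvalue)
  moreover have "finite (Re ` eigenvalues A)"
    by (rule finite_subset[OF _ symmetric_matrix_finite_eigenvalues[OF sym]])
      (auto elim: symmetric_matrix_eigenvalue_real[OF sym])
  ultimately have "\<mu> \<le> lambda_max A"
    unfolding lambda_max_def by simp
  then have "\<mu> * (v \<bullet> v) \<le> lambda_max A * (v \<bullet> v)"
    by (simp add: mult_right_mono)
  then show ?thesis
    using \<mu>[of v] by linarith
qed

section \<open>Differential inequalities\<close>

lemma has_vector_derivative_vec_nth:
  assumes "(x has_vector_derivative u) F"
  shows "((\<lambda>t. x t $ i) has_real_derivative u $ i) F"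
  using bounded_linear.has_vector_derivative[OF bounded_linear_vec_nth assms]
  by (simp add: has_real_derivative_iff_has_vector_derivative)

lemma decreasing_if_real_derivative_nonpos:
  fixes f :: "real \<Rightarrow> real"
  assumes "a \<le> b"
    and "\<And>t. t \<in> {a..b} \<Longrightarrow> (f has_real_derivative f' t) (at t within {a..b})"
    and "\<And>t. t \<in> {a..b} \<Longrightarrow> f' t \<le> 0"
  shows "f b \<le> f a"
proof -
  obtain t where "t \<in> {a..b}" "f b - f a = f' t * (b - a)"
    using mvt_very_simple[OF assms(1), of f "\<lambda>t. (*) (f' t)"] assms(2)
    unfolding has_field_derivative_def by auto
  moreover have "f' t * (b - a) \<le> 0"
    using assms(1,3) \<open>t \<in> {a..b}\<close> by (simp add: mult_nonpos_nonneg)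
  ultimately show ?thesis
    by linarith
qed

lemma gronwall_vanishing:
  fixes P :: "real \<Rightarrow> real"
  assumes "0 \<le> T" "P 0 = 0" "\<And>t. t \<in> {0..T} \<Longrightarrow> 0 \<le> P t"
    and "\<And>t. t \<in> {0..T} \<Longrightarrow> (P has_real_derivative P' t) (at t within {0..T})"
    and "\<And>t. t \<in> {0..T} \<Longrightarrow> P' t \<le> K * P t"
  shows "P T = 0"
proof -
  have "exp (- K * T) * P T \<le> exp (- K * 0) * P 0"
  proof (rule decreasing_if_real_derivative_nonpos[OF \<open>0 \<le> T\<close>])
    fix t assume t: "t \<in> {0..T}"
    show "((\<lambda>t. exp (- K * t) * P t) has_real_derivative exp (- K * t) * (P' t - K * P t))
      (at t within {0..T})"
      by (rule derivative_eq_intros assms(4)[OF t] refl | simp add: algebra_simps)+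
    show "exp (- K * t) * (P' t - K * P t) \<le> 0"
      using assms(5)[OF t] by (simp add: mult_nonneg_nonpos)
  qed
  then show ?thesis
    using assms(1-3) by (simp add: mult_le_0_iff order.antisym)
qed

lemma has_real_derivative_pos_part_sq: "((\<lambda>s. (max s 0)\<^sup>2) has_real_derivative 2 * max s 0) (at s)"
proof -
  consider "s > 0" | "s < 0" | "s = 0"
    by linarith
  then show ?thesis
  proof cases
    case 1
    have "((\<lambda>s. s\<^sup>2) has_real_derivative 2 * max s 0) (at s)"
      using 1 by (auto intro!: derivative_eq_intros)
    then show ?thesis
      by (rule has_field_derivative_transform_within_open[where S = "{0<..}"]) (use 1 in auto)
  next
    case 2
    have "((\<lambda>s. 0) has_real_derivative 2 * max s 0) (at s)"
      using 2 by simp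
    then show ?thesis
      by (rule has_field_derivative_transform_within_open[where S = "{..<0}"]) (use 2 in auto)
  next
    case 3
    have "((\<lambda>h. max h 0) \<longlongrightarrow> max 0 0) (at (0::real))"
      by (intro tendsto_intros)
    then have "((\<lambda>h. max h 0) \<longlongrightarrow> 2 * max 0 0) (at (0::real))"
      by simp
    moreover have "\<forall>\<^sub>F h in at (0::real). max h 0 = ((max h 0)\<^sup>2 - (max 0 0)\<^sup>2) / (h - 0)"
      unfolding eventually_at_filter by (intro always_eventually) (simp add: max_def power2_eq_square)
    ultimately show ?thesis
      unfolding 3 has_field_derivative_iff by (rule Lim_transform_eventually)
  qed
qed

lemma has_real_derivative_inner_self:
  assumes "(x has_vector_derivative u) (at t within S)"
  shows "((\<lambda>t. x t \<bullet> x t) has_real_derivative 2 * (x t \<bullet> u)) (at t within S)"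
  using has_derivative_inner[OF assms[unfolded has_vector_derivative_def]
      assms[unfolded has_vector_derivative_def]]
  unfolding has_field_derivative_def
  by (rule has_derivative_eq_rhs) (auto simp: inner_commute algebra_simps)

lemma inner_self_decrease:
  fixes x :: "real \<Rightarrow> 'a::real_inner"
  assumes "0 \<le> s" "s \<le> r"
    and "\<And>t. 0 \<le> t \<Longrightarrow> (x has_vector_derivative x' t) (at t within {0..})"
    and "\<And>t. t \<in> {s..r} \<Longrightarrow> 2 * (x t \<bullet> x' t) \<le> - c"
  shows "x r \<bullet> x r + c * (r - s) \<le> x s \<bullet> x s"
proof -
  have "(\<lambda>t. x t \<bullet> x t + c * (t - s)) r \<le> (\<lambda>t. x t \<bullet> x t + c * (t - s)) s"
  proof (rule decreasing_if_real_derivative_nonpos[OF \<open>s \<le> r\<close>])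
    fix t assume t: "t \<in> {s..r}"
    then have "(x has_vector_derivative x' t) (at t within {s..r})"
      using has_vector_derivative_within_subset[OF assms(3)[of t], of "{s..r}"] assms(1) by auto
    then have "((\<lambda>t. x t \<bullet> x t) has_real_derivative 2 * (x t \<bullet> x' t)) (at t within {s..r})"
      by (rule has_real_derivative_inner_self)
    then show "((\<lambda>t. x t \<bullet> x t + c * (t - s)) has_real_derivative 2 * (x t \<bullet> x' t) + c)
        (at t within {s..r})"
      using DERIV_add[OF _ DERIV_cmult[OF DERIV_diff[OF DERIV_ident DERIV_const]], of _ _ t "{s..r}" c s]
      by simp
    show "2 * (x t \<bullet> x' t) + c \<le> 0"
      using assms(4)[OF t] by linarith
  qed
  then show ?thesis
    by simp
qed

lemma tendsto_0_if_antimono_inf_0: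
  fixes V :: "real \<Rightarrow> real"
  assumes "\<And>s r. 0 \<le> s \<Longrightarrow> s \<le> r \<Longrightarrow> V r \<le> V s" "\<And>t. 0 \<le> V t"
    and "\<And>\<epsilon>. 0 < \<epsilon> \<Longrightarrow> \<exists>t\<ge>0. V t < \<epsilon>"
  shows "(V \<longlongrightarrow> 0) at_top"
proof (rule order_tendstoI)
  fix a :: real assume "a < 0"
  then show "\<forall>\<^sub>F t in at_top. a < V t"
    by (intro always_eventually allI) (rule less_le_trans[OF _ assms(2)])
next
  fix \<epsilon> :: real assume "0 < \<epsilon>"
  then obtain s where "0 \<le> s" "V s < \<epsilon>"
    using assms(3) by blast
  then have "V t < \<epsilon>" if "s \<le> t" for t
    using assms(1)[OF \<open>0 \<le> s\<close> that] by linarith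
  then show "\<forall>\<^sub>F t in at_top. V t < \<epsilon>"
    unfolding eventually_at_top_linorder by blast
qed

text \<open>While x \<bullet> x \<ge> \<epsilon>, the trajectory stays in a compact set avoiding 0 on which F has a
  positive minimum, so x \<bullet> x decreases at a fixed positive rate.\<close>

lemma tendsto_0_if_sq_norm_dissipative:
  fixes x :: "real \<Rightarrow> 'a::euclidean_space"
  assumes K: "closed K" "\<And>t. 0 \<le> t \<Longrightarrow> x t \<in> K"
    and F: "continuous_on K F" "\<And>w. w \<in> K \<Longrightarrow> 0 \<le> F w" "\<And>w. w \<in> K \<Longrightarrow> w \<noteq> 0 \<Longrightarrow> 0 < F w"
    and dx: "\<And>t. 0 \<le> t \<Longrightarrow> (x has_vector_derivative x' t) (at t within {0..})"
    and dissipative: "\<And>t. 0 \<le> t \<Longrightarrow> 2 * (x t \<bullet> x' t) \<le> - F (x t)"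
  shows "(x \<longlongrightarrow> 0) at_top"
proof -
  define V where "V t = x t \<bullet> x t" for t
  have decrease: "V r + c * (r - s) \<le> V s"
    if "0 \<le> s" "s \<le> r" and c: "\<And>t. t \<in> {s..r} \<Longrightarrow> c \<le> F (x t)" for s r c
  proof -
    have "2 * (x t \<bullet> x' t) \<le> - c" if "t \<in> {s..r}" for t
      using dissipative[of t] c[OF that] \<open>0 \<le> s\<close> that by auto
    from inner_self_decrease[OF \<open>0 \<le> s\<close> \<open>s \<le> r\<close> dx this] show ?thesis
      unfolding V_def .
  qed
  have antimono: "V r \<le> V s" if "0 \<le> s" "s \<le> r" for s r
    using decrease[OF that, of 0] F(2) K(2) that by auto
  have "\<exists>t\<ge>0. V t < \<epsilon>" if "0 < \<epsilon>" for \<epsilon>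
  proof (rule ccontr)
    assume "\<not> (\<exists>t\<ge>0. V t < \<epsilon>)"
    then have big: "\<epsilon> \<le> V t" if "0 \<le> t" for t
      using that by (meson not_le)
    define S where "S = K \<inter> {w. \<epsilon> \<le> w \<bullet> w \<and> w \<bullet> w \<le> V 0}"
    have in_S: "x t \<in> S" if "0 \<le> t" for t
      using K(2) big antimono[of 0 t] that by (simp add: S_def V_def)
    have "closed S"
      unfolding S_def Collect_conj_eq
      by (intro closed_Int K(1) closed_Collect_le continuous_intros)
    moreover have "bounded S"
    proof -
      have "norm w \<le> sqrt (V 0)" if "w \<in> S" for w
        using that by (simp add: S_def norm_eq_sqrt_inner)
      then show ?thesis
        unfolding bounded_iff by blast
    qed
    ultimately have "compact S"
      by (simp add: compact_eq_bounded_closed)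
    moreover have "S \<noteq> {}"
      using in_S[of 0] by auto
    moreover have "continuous_on S F"
      using F(1) by (rule continuous_on_subset) (simp add: S_def)
    ultimately have "\<exists>w\<in>S. \<forall>v\<in>S. F w \<le> F v"
      by (rule continuous_attains_inf)
    then obtain w where "w \<in> S" and w_min: "\<And>v. v \<in> S \<Longrightarrow> F w \<le> F v"
      by blast
    moreover have "w \<noteq> 0"
      using \<open>w \<in> S\<close> \<open>0 < \<epsilon>\<close> by (auto simp: S_def)
    ultimately have "0 < F w"
      using F(3) by (simp add: S_def)
    define r where "r = V 0 / F w + 1"
    have "0 \<le> r"
      using \<open>0 < F w\<close> by (simp add: r_def V_def)
    then have "V r + F w * r \<le> V 0"
      using decrease[of 0 r "F w"] w_min in_S by simp
    moreover have "F w * r = V 0 + F w"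
      using \<open>0 < F w\<close> by (simp add: r_def field_simps)
    ultimately show False
      using big[OF \<open>0 \<le> r\<close>] \<open>0 < F w\<close> \<open>0 < \<epsilon>\<close> by linarith
  qed
  then have "(V \<longlongrightarrow> 0) at_top"
    by (intro tendsto_0_if_antimono_inf_0 antimono) (simp_all add: V_def)
  then have "((\<lambda>t. sqrt (V t)) \<longlongrightarrow> sqrt 0) at_top"
    by (rule tendsto_real_sqrt)
  then have "((\<lambda>t. norm (x t)) \<longlongrightarrow> 0) at_top"
    by (simp add: V_def norm_eq_sqrt_inner)
  then show ?thesis
    by (rule tendsto_norm_zero_cancel)
qed

section \<open>Forward invariance of the domain\<close>

definition domain_penalty :: "real^'n \<Rightarrow> real^'n \<Rightarrow> real" where
  "domain_penalty x y =
     (\<Sum>i\<in>UNIV. (max (- x $ i) 0)\<^sup>2 + (max (- y $ i) 0)\<^sup>2 + (max (x $ i + y $ i - 1) 0)\<^sup>2)"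

definition domain_penalty_deriv :: "real^'n \<Rightarrow> real^'n \<Rightarrow> real^'n \<Rightarrow> real^'n \<Rightarrow> real" where
  "domain_penalty_deriv x y u v =
     (\<Sum>i\<in>UNIV. 2 * max (- x $ i) 0 * - u $ i + 2 * max (- y $ i) 0 * - v $ i
                + 2 * max (x $ i + y $ i - 1) 0 * (u $ i + v $ i))"

lemma domain_penalty_nonneg: "0 \<le> domain_penalty x y"
  unfolding domain_penalty_def by (intro sum_nonneg) simp

lemma domain_penalty_commute: "domain_penalty y x = domain_penalty x y"
  unfolding domain_penalty_def by (simp add: add_ac)

lemma domain_penalty_eq_0_iff: "domain_penalty x y = 0 \<longleftrightarrow> (x, y) \<in> bivirus_domain"
proof -
  have "domain_penalty x y = 0 \<longleftrightarrow>
      (\<forall>i. (max (- x $ i) 0)\<^sup>2 + (max (- y $ i) 0)\<^sup>2 + (max (x $ i + y $ i - 1) 0)\<^sup>2 = 0)"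
    unfolding domain_penalty_def by (simp add: sum_nonneg_eq_0_iff add_nonneg_nonneg)
  also have "\<dots> \<longleftrightarrow> (\<forall>i. 0 \<le> x $ i \<and> 0 \<le> y $ i \<and> x $ i + y $ i \<le> 1)"
    by (auto simp: add_nonneg_eq_0_iff add_nonneg_nonneg max_def)
  also have "\<dots> \<longleftrightarrow> (\<forall>i. 0 \<le> x $ i \<and> x $ i \<le> 1 \<and> 0 \<le> y $ i \<and> y $ i \<le> 1 \<and> x $ i + y $ i \<le> 1)"
    by (rule iff_allI) linarith
  also have "\<dots> \<longleftrightarrow> (x, y) \<in> bivirus_domain"
    unfolding bivirus_domain_def by simp
  finally show ?thesis .
qed

lemma domain_violation_le_sqrt_penalty:
  shows "max (- x $ i) 0 \<le> sqrt (domain_penalty x y)"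
    and "max (x $ i + y $ i - 1) 0 \<le> sqrt (domain_penalty x y)"
proof -
  have "(max (- x $ i) 0)\<^sup>2 + (max (- y $ i) 0)\<^sup>2 + (max (x $ i + y $ i - 1) 0)\<^sup>2
      \<le> domain_penalty x y"
    unfolding domain_penalty_def by (rule member_le_sum) auto
  then have "(max (- x $ i) 0)\<^sup>2 \<le> domain_penalty x y"
    and "(max (x $ i + y $ i - 1) 0)\<^sup>2 \<le> domain_penalty x y"
    by (smt (verit) zero_le_power2)+
  then show "max (- x $ i) 0 \<le> sqrt (domain_penalty x y)"
    and "max (x $ i + y $ i - 1) 0 \<le> sqrt (domain_penalty x y)"
    using real_le_rsqrt by blast+
qed

lemma domain_penalty_has_real_derivative:
  assumes "(x has_vector_derivative u) (at t within S)" "(y has_vector_derivative v) (at t within S)"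
  shows "((\<lambda>t. domain_penalty (x t) (y t)) has_real_derivative domain_penalty_deriv (x t) (y t) u v)
    (at t within S)"
  unfolding domain_penalty_def domain_penalty_deriv_def
  using has_vector_derivative_vec_nth[OF assms(1)] has_vector_derivative_vec_nth[OF assms(2)]
  by (intro DERIV_sum DERIV_add DERIV_chain2[OF has_real_derivative_pos_part_sq])
    (auto intro!: derivative_eq_intros)

lemma neg_mult_le_pos_parts:
  fixes a c :: real
  shows "- (c * a) \<le> \<bar>c\<bar> * max (- a) 0 + max (- c) 0 * \<bar>a\<bar>"
  by (cases "0 \<le> c"; cases "0 \<le> a") (simp_all add: max_def mult_le_0_iff zero_le_mult_iff)

lemma abs_matrix_vector_nth_le:
  fixes A :: "real^'n^'n" and C :: real
  assumes A: "\<forall>i j. A $ i $ j \<in> {0..1}" and "\<And>j. \<bar>v $ j\<bar> \<le> C"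
  shows "\<bar>(A *v v) $ i\<bar> \<le> real CARD('n) * C"
proof -
  have "\<bar>A $ i $ j * v $ j\<bar> \<le> C" for j
  proof -
    have "\<bar>A $ i $ j * v $ j\<bar> = A $ i $ j * \<bar>v $ j\<bar>"
      using A by (simp add: abs_mult)
    also have "\<dots> \<le> \<bar>v $ j\<bar>"
      using A by (intro mult_left_le_one_le) auto
    finally show ?thesis
      using assms(2)[of j] by linarith
  qed
  then have "(\<Sum>j\<in>UNIV. \<bar>A $ i $ j * v $ j\<bar>) \<le> (\<Sum>j\<in>(UNIV::'n set). C)"
    by (intro sum_mono)
  moreover have "\<bar>(A *v v) $ i\<bar> \<le> (\<Sum>j\<in>UNIV. \<bar>A $ i $ j * v $ j\<bar>)"
    unfolding matrix_vector_mult_def by (simp add: sum_abs)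
  ultimately show ?thesis
    by simp
qed

lemma neg_matrix_vector_nth_le:
  fixes A :: "real^'n^'n"
  assumes A: "\<forall>i j. A $ i $ j \<in> {0..1}"
  shows "- (A *v v) $ i \<le> (\<Sum>j\<in>UNIV. max (- v $ j) 0)"
proof -
  have "A $ i $ j * - v $ j \<le> max (- v $ j) 0" for j
  proof -
    have "A $ i $ j * - v $ j \<le> A $ i $ j * max (- v $ j) 0"
      using A by (intro mult_left_mono) auto
    also have "\<dots> \<le> max (- v $ j) 0"
      using A by (intro mult_left_le_one_le) auto
    finally show ?thesis .
  qed
  then have "(\<Sum>j\<in>UNIV. A $ i $ j * - v $ j) \<le> (\<Sum>j\<in>UNIV. max (- v $ j) 0)"
    by (intro sum_mono)
  then show ?thesis
    by (simp add: matrix_vector_mult_def sum_negf)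
qed

text \<open>Each violated constraint moves outward at a speed of at most k times the square root
  of the penalty, where k only depends on a bound C for the coordinates.\<close>

lemma bivirus_x_penalty_rate_le:
  fixes A :: "real^'n^'n" and C :: real
  assumes A: "\<forall>i j. A $ i $ j \<in> {0..1}" and "0 \<le> \<beta>" "0 \<le> \<delta>"
    and bounded: "\<And>j. \<bar>x $ j\<bar> \<le> C \<and> \<bar>y $ j\<bar> \<le> C"
  defines "k \<equiv> \<beta> * (1 + 3 * C) * real CARD('n) + \<delta>"
  shows "max (- x $ i) 0 * - bivirus_x A \<beta> \<delta> x y $ i \<le> k * domain_penalty x y"
    and "max (x $ i + y $ i - 1) 0 * bivirus_x A \<beta> \<delta> x y $ i \<le> k * domain_penalty x y"
proof -
  define N where "N = real CARD('n)"
  define Z where "Z = sqrt (domain_penalty x y)"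
  define a where "a = (A *v x) $ i"
  define c where "c = 1 - x $ i - y $ i"
  have f: "bivirus_x A \<beta> \<delta> x y $ i = \<beta> * c * a - \<delta> * x $ i"
    by (simp add: bivirus_x_def a_def c_def)
  have "0 \<le> C"
    using bounded[of i] by linarith
  have "0 \<le> Z" "0 \<le> N"
    by (simp_all add: Z_def N_def domain_penalty_nonneg)
  have "0 \<le> k"
    using \<open>0 \<le> C\<close> assms(2,3) by (simp add: k_def)
  have x_viol: "max (- x $ j) 0 \<le> Z" for j
    unfolding Z_def by (rule domain_violation_le_sqrt_penalty)
  have s_viol: "max (x $ i + y $ i - 1) 0 \<le> Z"
    unfolding Z_def by (rule domain_violation_le_sqrt_penalty)
  have abs_a: "\<bar>a\<bar> \<le> N * C"
    unfolding a_def N_def using A bounded by (intro abs_matrix_vector_nth_le) auto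
  have "(\<Sum>j\<in>UNIV. max (- x $ j) 0) \<le> (\<Sum>j\<in>(UNIV::'n set). Z)"
    by (intro sum_mono x_viol)
  then have "- a \<le> N * Z"
    using neg_matrix_vector_nth_le[OF A, of x i] by (simp add: a_def N_def)
  then have neg_a: "max (- a) 0 \<le> N * Z"
    using \<open>0 \<le> Z\<close> \<open>0 \<le> N\<close> by simp
  have abs_c: "\<bar>c\<bar> \<le> 1 + 2 * C"
    using bounded[of i] by (simp add: c_def abs_le_iff)
  have weight: "u * r \<le> k * domain_penalty x y" if "0 \<le> u" "u \<le> Z" "0 < u \<Longrightarrow> r \<le> k * Z" for u r
  proof (cases "u = 0")
    case False
    then have "u * r \<le> u * (k * Z)"
      using that by (intro mult_left_mono) auto
    also have "\<dots> \<le> Z * (k * Z)"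
      using that \<open>0 \<le> k\<close> \<open>0 \<le> Z\<close> by (intro mult_right_mono) auto
    also have "\<dots> = k * domain_penalty x y"
      using domain_penalty_nonneg[of x y] by (simp add: Z_def)
    finally show ?thesis .
  qed (simp add: \<open>0 \<le> k\<close> domain_penalty_nonneg)
  show "max (- x $ i) 0 * - bivirus_x A \<beta> \<delta> x y $ i \<le> k * domain_penalty x y"
  proof (rule weight)
    assume "0 < max (- x $ i) 0"
    then have "- bivirus_x A \<beta> \<delta> x y $ i \<le> \<beta> * - (c * a)"
      using \<open>0 \<le> \<delta>\<close> by (simp add: f mult_nonneg_nonpos)
    also have "\<dots> \<le> \<beta> * (\<bar>c\<bar> * max (- a) 0 + max (- c) 0 * \<bar>a\<bar>)"
      using \<open>0 \<le> \<beta>\<close> by (intro mult_left_mono neg_mult_le_pos_parts)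
    also have "\<dots> \<le> \<beta> * ((1 + 2 * C) * (N * Z) + Z * (N * C))"
      using \<open>0 \<le> \<beta>\<close> abs_c neg_a abs_a s_viol \<open>0 \<le> C\<close>
      by (intro mult_left_mono add_mono mult_mono) (auto simp: c_def)
    also have "\<dots> \<le> k * Z"
      using \<open>0 \<le> \<delta>\<close> \<open>0 \<le> Z\<close> by (simp add: k_def N_def algebra_simps)
    finally show "- bivirus_x A \<beta> \<delta> x y $ i \<le> k * Z" .
  qed (use x_viol[of i] in auto)
  show "max (x $ i + y $ i - 1) 0 * bivirus_x A \<beta> \<delta> x y $ i \<le> k * domain_penalty x y"
  proof (rule weight)
    assume "0 < max (x $ i + y $ i - 1) 0"
    then have "\<bar>c\<bar> \<le> Z"
      using s_viol by (simp add: c_def)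
    have "\<beta> * c * a \<le> \<beta> * (\<bar>c\<bar> * \<bar>a\<bar>)"
      using \<open>0 \<le> \<beta>\<close> by (simp add: mult.assoc mult_left_mono flip: abs_mult)
    also have "\<dots> \<le> \<beta> * (Z * (N * C))"
      using \<open>0 \<le> \<beta>\<close> \<open>\<bar>c\<bar> \<le> Z\<close> abs_a \<open>0 \<le> Z\<close> by (intro mult_left_mono mult_mono) auto
    finally have "\<beta> * c * a \<le> \<beta> * (Z * (N * C))" .
    moreover have "\<delta> * - x $ i \<le> \<delta> * Z"
      using \<open>0 \<le> \<delta>\<close> x_viol[of i] by (intro mult_left_mono) auto
    ultimately have "bivirus_x A \<beta> \<delta> x y $ i \<le> \<beta> * (Z * (N * C)) + \<delta> * Z"
      by (simp add: f)
    also have "\<dots> \<le> k * Z"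
      using \<open>0 \<le> \<beta>\<close> \<open>0 \<le> C\<close> \<open>0 \<le> Z\<close> \<open>0 \<le> N\<close>
      by (simp add: k_def N_def algebra_simps)
    finally show "bivirus_x A \<beta> \<delta> x y $ i \<le> k * Z" .
  qed (use s_viol in auto)
qed

lemma bivirus_penalty_deriv_le:
  fixes A B :: "real^'n^'n" and C :: real
  assumes A: "\<forall>i j. A $ i $ j \<in> {0..1}" and B: "\<forall>i j. B $ i $ j \<in> {0..1}"
    and "0 \<le> \<beta>1" "0 \<le> \<delta>1" "0 \<le> \<beta>2" "0 \<le> \<delta>2"
  obtains K where "\<And>x y. (\<And>j. \<bar>x $ j\<bar> \<le> C \<and> \<bar>y $ j\<bar> \<le> C) \<Longrightarrow>
    domain_penalty_deriv x y (bivirus_x A \<beta>1 \<delta>1 x y) (bivirus_x B \<beta>2 \<delta>2 y x)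
      \<le> K * domain_penalty x y"
proof -
  define k1 where "k1 = \<beta>1 * (1 + 3 * C) * real CARD('n) + \<delta>1"
  define k2 where "k2 = \<beta>2 * (1 + 3 * C) * real CARD('n) + \<delta>2"
  show thesis
  proof (rule that[of "real CARD('n) * (4 * (k1 + k2))"])
    fix x y :: "real^'n"
    assume bounded: "\<And>j. \<bar>x $ j\<bar> \<le> C \<and> \<bar>y $ j\<bar> \<le> C"
    let ?P = "domain_penalty x y" and ?f = "bivirus_x A \<beta>1 \<delta>1 x y" and ?g = "bivirus_x B \<beta>2 \<delta>2 y x"
    have "2 * max (- x $ i) 0 * - ?f $ i + 2 * max (- y $ i) 0 * - ?g $ i
        + 2 * max (x $ i + y $ i - 1) 0 * (?f $ i + ?g $ i) \<le> 4 * (k1 + k2) * ?P" for i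
    proof -
      have "max (- x $ i) 0 * - ?f $ i \<le> k1 * ?P"
        and "max (x $ i + y $ i - 1) 0 * ?f $ i \<le> k1 * ?P"
        unfolding k1_def using bivirus_x_penalty_rate_le[OF A assms(3,4) bounded] by blast+
      moreover have "max (- y $ i) 0 * - ?g $ i \<le> k2 * ?P"
        and "max (x $ i + y $ i - 1) 0 * ?g $ i \<le> k2 * ?P"
        using bivirus_x_penalty_rate_le[OF B assms(5,6), of y C x i] bounded
        by (auto simp: k2_def add.commute domain_penalty_commute)
      ultimately show ?thesis
        by (simp only: distrib_left distrib_right mult.assoc)
    qed
    then have "domain_penalty_deriv x y ?f ?g \<le> (\<Sum>i\<in>(UNIV::'n set). 4 * (k1 + k2) * ?P)"
      unfolding domain_penalty_deriv_def by (intro sum_mono)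
    then show "domain_penalty_deriv x y ?f ?g \<le> real CARD('n) * (4 * (k1 + k2)) * ?P"
      by simp
  qed
qed

lemma bivirus_domain_forward_invariant:
  fixes A B :: "real^'n^'n" and x y :: "real \<Rightarrow> real^'n"
  assumes A: "\<forall>i j. A $ i $ j \<in> {0..1}" and B: "\<forall>i j. B $ i $ j \<in> {0..1}"
    and "0 \<le> \<beta>1" "0 \<le> \<delta>1" "0 \<le> \<beta>2" "0 \<le> \<delta>2"
    and init: "(x 0, y 0) \<in> bivirus_domain"
    and dx: "\<And>t. 0 \<le> t \<Longrightarrow> (x has_vector_derivative bivirus_x A \<beta>1 \<delta>1 (x t) (y t)) (at t within {0..})"
    and dy: "\<And>t. 0 \<le> t \<Longrightarrow> (y has_vector_derivative bivirus_x B \<beta>2 \<delta>2 (y t) (x t)) (at t within {0..})"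
    and "0 \<le> T"
  shows "(x T, y T) \<in> bivirus_domain"
proof -
  have "continuous_on {0..} x" "continuous_on {0..} y"
    unfolding continuous_on_eq_continuous_within
    by (auto intro: has_vector_derivative_continuous dx dy)
  then have "compact ((\<lambda>t. (x t, y t)) ` {0..T})"
    by (intro compact_continuous_image continuous_on_Pair compact_Icc)
      (auto elim: continuous_on_subset)
  then obtain C where C: "\<forall>z \<in> (\<lambda>t. (x t, y t)) ` {0..T}. norm z \<le> C"
    by (meson bounded_iff compact_imp_bounded)
  have bounded: "\<bar>x t $ j\<bar> \<le> C \<and> \<bar>y t $ j\<bar> \<le> C" if "t \<in> {0..T}" for t j
  proof -
    have "norm (x t, y t) \<le> C"
      using C that by blast
    moreover have "\<bar>x t $ j\<bar> \<le> norm (x t)" "\<bar>y t $ j\<bar> \<le> norm (y t)"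
      by (rule component_le_norm_cart)+
    moreover have "norm (x t) \<le> norm (x t, y t)" "norm (y t) \<le> norm (x t, y t)"
      by (rule norm_fst_le norm_snd_le)+
    ultimately show ?thesis
      by linarith
  qed
  obtain K where K: "\<And>x y. (\<And>j. \<bar>x $ j\<bar> \<le> C \<and> \<bar>y $ j\<bar> \<le> C) \<Longrightarrow>
      domain_penalty_deriv x y (bivirus_x A \<beta>1 \<delta>1 x y) (bivirus_x B \<beta>2 \<delta>2 y x)
        \<le> K * domain_penalty x y"
    using bivirus_penalty_deriv_le[OF A B assms(3-6), where C = C] by metis
  define P where "P t = domain_penalty (x t) (y t)" for t
  have "P T = 0"
  proof (rule gronwall_vanishing[OF \<open>0 \<le> T\<close>])
    show "P 0 = 0"
      using init by (simp add: P_def domain_penalty_eq_0_iff)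
    fix t assume t: "t \<in> {0..T}"
    show "0 \<le> P t"
      by (simp add: P_def domain_penalty_nonneg)
    show "(P has_real_derivative domain_penalty_deriv (x t) (y t)
        (bivirus_x A \<beta>1 \<delta>1 (x t) (y t)) (bivirus_x B \<beta>2 \<delta>2 (y t) (x t))) (at t within {0..T})"
      unfolding P_def using t
      by (intro domain_penalty_has_real_derivative has_vector_derivative_within_subset[OF dx]
          has_vector_derivative_within_subset[OF dy]) auto
    show "domain_penalty_deriv (x t) (y t)
        (bivirus_x A \<beta>1 \<delta>1 (x t) (y t)) (bivirus_x B \<beta>2 \<delta>2 (y t) (x t)) \<le> K * P t"
      unfolding P_def by (rule K) (rule bounded[OF t])
  qed
  then show ?thesis
    by (simp add: P_def domain_penalty_eq_0_iff)
qed

section \<open>Extinction of each virus\<close>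

definition bivirus_dissipation :: "real^'n^'n \<Rightarrow> real \<Rightarrow> real \<Rightarrow> real^'n \<Rightarrow> real" where
  "bivirus_dissipation A \<beta> \<delta> w =
     \<delta> * (w \<bullet> w) - \<beta> * (w \<bullet> (A *v w)) + \<beta> * (\<Sum>i\<in>UNIV. (w $ i)\<^sup>2 * (A *v w) $ i)"

lemma inner_bivirus_x:
  "x \<bullet> bivirus_x A \<beta> \<delta> x y
     = - bivirus_dissipation A \<beta> \<delta> x - \<beta> * (\<Sum>i\<in>UNIV. x $ i * y $ i * (A *v x) $ i)"
proof -
  have "x \<bullet> bivirus_x A \<beta> \<delta> x y = (\<Sum>i\<in>UNIV. - (\<delta> * (x $ i * x $ i) - \<beta> * (x $ i * (A *v x) $ i)
      + \<beta> * ((x $ i)\<^sup>2 * (A *v x) $ i)) - \<beta> * (x $ i * y $ i * (A *v x) $ i))"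
    unfolding inner_vec_def bivirus_x_def
    by (intro sum.cong) (simp_all add: power2_eq_square algebra_simps)
  also have "\<dots> = - bivirus_dissipation A \<beta> \<delta> x - \<beta> * (\<Sum>i\<in>UNIV. x $ i * y $ i * (A *v x) $ i)"
    by (simp add: bivirus_dissipation_def inner_vec_def sum.distrib sum_subtractf sum_negf
        sum_distrib_left)
  finally show ?thesis .
qed

lemma matrix_vector_nth_nonneg:
  fixes A :: "real^'n^'n"
  assumes "\<forall>i j. 0 \<le> A $ i $ j" "\<forall>j. 0 \<le> v $ j"
  shows "0 \<le> (A *v v) $ i"
  using assms by (simp add: matrix_vector_mult_def sum_nonneg)

text \<open>The cubic term handles the critical case \<tau> \<lambda>(A) = 1: it vanishes only if
  w \<bullet> A w = 0, and then the dissipation is \<delta> (w \<bullet> w).\<close>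

lemma bivirus_dissipation_pos:
  fixes A :: "real^'n^'n"
  assumes A: "\<forall>i j. 0 \<le> A $ i $ j" and "0 < \<beta>" "0 < \<delta>"
    and quad: "\<And>v. \<beta> * (v \<bullet> (A *v v)) \<le> \<delta> * (v \<bullet> v)"
    and w: "\<forall>j. 0 \<le> w $ j" "w \<noteq> 0"
  shows "0 < bivirus_dissipation A \<beta> \<delta> w"
proof -
  have terms_nonneg: "0 \<le> (w $ i)\<^sup>2 * (A *v w) $ i" for i
    using matrix_vector_nth_nonneg[OF A w(1)] by simp
  show ?thesis
  proof (cases "(\<Sum>i\<in>UNIV. (w $ i)\<^sup>2 * (A *v w) $ i) = 0")
    case True
    then have "w $ i * (A *v w) $ i = 0" for i
      using terms_nonneg by (simp add: sum_nonneg_eq_0_iff)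
    then have "w \<bullet> (A *v w) = 0"
      unfolding inner_vec_def inner_real_def by (intro sum.neutral) blast
    then show ?thesis
      using True w(2) \<open>0 < \<delta>\<close> by (simp add: bivirus_dissipation_def)
  next
    case False
    then have "0 < (\<Sum>i\<in>UNIV. (w $ i)\<^sup>2 * (A *v w) $ i)"
      using terms_nonneg by (simp add: order.not_eq_order_implies_strict sum_nonneg)
    then show ?thesis
      using quad[of w] mult_pos_pos[OF \<open>0 < \<beta>\<close>] unfolding bivirus_dissipation_def by fastforce
  qed
qed

lemma bivirus_x_tendsto_0:
  fixes A :: "real^'n^'n" and x y :: "real \<Rightarrow> real^'n"
  assumes A: "\<forall>i j. 0 \<le> A $ i $ j" and "0 < \<beta>" "0 < \<delta>"
    and quad: "\<And>v. \<beta> * (v \<bullet> (A *v v)) \<le> \<delta> * (v \<bullet> v)"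
    and nonneg: "\<And>t j. 0 \<le> t \<Longrightarrow> 0 \<le> x t $ j \<and> 0 \<le> y t $ j"
    and dx: "\<And>t. 0 \<le> t \<Longrightarrow> (x has_vector_derivative bivirus_x A \<beta> \<delta> (x t) (y t)) (at t within {0..})"
  shows "(x \<longlongrightarrow> 0) at_top"
proof (rule tendsto_0_if_sq_norm_dissipative[OF closed_positive_orthant _ _ _ _ dx])
  show "x t \<in> {w. \<forall>j. 0 \<le> w $ j}" if "0 \<le> t" for t
    using nonneg[OF that] by simp
  show "continuous_on {w. \<forall>j. 0 \<le> w $ j} (\<lambda>w. 2 * bivirus_dissipation A \<beta> \<delta> w)"
    unfolding bivirus_dissipation_def by (intro continuous_intros)
  show pos: "0 < 2 * bivirus_dissipation A \<beta> \<delta> w" if "w \<in> {w. \<forall>j. 0 \<le> w $ j}" "w \<noteq> 0" for w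
    using bivirus_dissipation_pos[OF A \<open>0 < \<beta>\<close> \<open>0 < \<delta>\<close> quad] that by simp
  show "0 \<le> 2 * bivirus_dissipation A \<beta> \<delta> w" if "w \<in> {w. \<forall>j. 0 \<le> w $ j}" for w
    using pos[OF that] by (cases "w = 0") (auto simp: bivirus_dissipation_def)
  show "2 * (x t \<bullet> bivirus_x A \<beta> \<delta> (x t) (y t)) \<le> - (2 * bivirus_dissipation A \<beta> \<delta> (x t))"
    if "0 \<le> t" for t
  proof -
    have "0 \<le> x t $ i * y t $ i * (A *v x t) $ i" for i
      using nonneg[OF that] matrix_vector_nth_nonneg[OF A, of "x t" i] by simp
    then have "0 \<le> \<beta> * (\<Sum>i\<in>UNIV. x t $ i * y t $ i * (A *v x t) $ i)"
      using \<open>0 < \<beta>\<close> by (simp add: sum_nonneg)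
    then show ?thesis
      by (simp add: inner_bivirus_x)
  qed
qed

lemma adjacency_matrix_symmetric:
  assumes "adjacency_matrix A"
  shows "transpose A = A"
  using assms by (simp add: adjacency_matrix_def transpose_def vec_eq_iff)

lemma adjacency_matrix_entries:
  assumes "adjacency_matrix A"
  shows "\<forall>i j. A $ i $ j \<in> {0..1}"
  using assms unfolding adjacency_matrix_def by (metis atLeastAtMost_iff order.refl zero_le_one)

lemma quadratic_form_le_if_threshold:
  fixes A :: "real^'n^'n"
  assumes "transpose A = A" "0 < \<beta>" "0 < \<delta>" "\<beta> / \<delta> * lambda_max A \<le> 1"
  shows "\<beta> * (v \<bullet> (A *v v)) \<le> \<delta> * (v \<bullet> v)"
proof -
  have "\<beta> * lambda_max A \<le> \<delta>"
    using assms(2-4) by (simp add: field_simps)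
  then have "\<beta> * (lambda_max A * (v \<bullet> v)) \<le> \<delta> * (v \<bullet> v)"
    by (metis inner_ge_zero mult.assoc mult_right_mono)
  moreover have "\<beta> * (v \<bullet> (A *v v)) \<le> \<beta> * (lambda_max A * (v \<bullet> v))"
    using assms(2) quadratic_form_le_lambda_max[OF assms(1)] by simp
  ultimately show ?thesis
    by linarith
qed

theorem corollary1:
  fixes A B :: "real^'n^'n"
    and \<beta>1 \<delta>1 \<beta>2 \<delta>2 :: real
    and x y :: "real \<Rightarrow> real^'n"
  assumes "adjacency_matrix A" "graph_connected A"
    and "adjacency_matrix B" "graph_connected B"
    and "\<beta>1 > 0" "\<delta>1 > 0" "\<beta>2 > 0" "\<delta>2 > 0"
    and "(\<beta>1 / \<delta>1) * lambda_max A \<le> 1"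
    and "(\<beta>2 / \<delta>2) * lambda_max B \<le> 1"
    and "(x 0, y 0) \<in> bivirus_domain"
    and "\<And>t. t \<ge> 0 \<Longrightarrow> (x has_vector_derivative bivirus_x A \<beta>1 \<delta>1 (x t) (y t)) (at t within {0..})"
    and "\<And>t. t \<ge> 0 \<Longrightarrow> (y has_vector_derivative bivirus_x B \<beta>2 \<delta>2 (y t) (x t)) (at t within {0..})"
  shows "((\<lambda>t. (x t, y t)) \<longlongrightarrow> (0, 0)) at_top"
proof -
  note A = adjacency_matrix_entries[OF assms(1)] and B = adjacency_matrix_entries[OF assms(3)]
  have "(x t, y t) \<in> bivirus_domain" if "0 \<le> t" for t
    using bivirus_domain_forward_invariant[OF A B _ _ _ _ assms(11-13) that] assms(5-8) by simp
  then have nonneg: "0 \<le> x t $ j \<and> 0 \<le> y t $ j" if "0 \<le> t" for t j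
    using that by (simp add: bivirus_domain_def)
  have "(x \<longlongrightarrow> 0) at_top"
    using A assms(5,6) quadratic_form_le_if_threshold[OF adjacency_matrix_symmetric[OF assms(1)] assms(5,6,9)]
    by (intro bivirus_x_tendsto_0[OF _ _ _ _ nonneg assms(12)]) auto
  moreover have "(y \<longlongrightarrow> 0) at_top"
    using B assms(7,8) quadratic_form_le_if_threshold[OF adjacency_matrix_symmetric[OF assms(3)] assms(7,8,10)]
    by (intro bivirus_x_tendsto_0[OF _ _ _ _ _ assms(13)]) (auto simp: nonneg)
  ultimately show ?thesis
    by (rule tendsto_Pair)
qed

end
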